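(* Let $(\mathbb{P},\leq)$ be a lattice with enough prime elements, and let $p\in\mathbb{P}$. Then $\mathsf{S}_{\mathrm{fin}}(\mathbb{V}_p,\mathbb{V}_p)$ holds if and only if Player I does not have a winning strategy in the game $\mathsf{G}_{\mathrm{fin}}(\mathbb{V}_p,\mathbb{V}_p)$.
   Context: A lattice is a poset in which every two elements $a,b$ have a supremum $a\vee b$ and an infimum $a\wedge b$. For $p\in\mathbb{P}$, $\mathbb{V}_p$ denotes the family of all subsets $A\subseteq\mathbb{P}$ such that $\sup A$ exists and equals $p$. A prime element of $\mathbb{P}$ is an element $q\in\mathbb{P}$ (required to be different from the maximum $1$ if $\mathbb{P}$ is bounded) such that for all $a,b\in\mathbb{P}$, $a\wedge b\leq q$ implies $a\leq q$ or $b\leq q$. $\mathbb{P}$ has enough prime elements if whenever $a,b\in\mathbb{P}$ satisfy $a\not\leq b$, there is a prime element $q$ with $b\leq q$ and $a\not\leq q$. For families $\mathcal{A},\mathcal{B}$ of subsets of $\mathbb{P}$: $\mathsf{S}_{\mathrm{fin}}(\mathcal{A},\mathcal{B})$ means that for every sequence $(A_n)_{n\in\omega}$ of members of $\mathcal{A}$ there are finite sets $F_n\subseteq A_n$ with $\bigcup_{n\in\omega}F_n\in\mathcal{B}$. The game $\mathsf{G}_{\mathrm{fin}}(\mathcal{A},\mathcal{B})$ has innings $n\in\omega$: in inning $n$ Player I plays some $A_n\in\mathcal{A}$ and Player II responds with a finite $F_n\subseteq A_n$; Player II wins the play if $\bigcup_{n\in\omega}F_n\in\mathcal{B}$, otherwise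 Player I wins. A strategy for Player I is a rule assigning Player I's move to each finite sequence of Player II's previous moves; it is winning if Player I wins every play following it. *)

theory Defs
  imports Main
begin

definition is_sup :: "'a::order set \<Rightarrow> 'a \<Rightarrow> bool" where
  "is_sup A p \<longleftrightarrow> (\<forall>a\<in>A. a \<le> p) \<and> (\<forall>u. (\<forall>a\<in>A. a \<le> u) \<longrightarrow> p \<le> u)"

definition V :: "'a::order \<Rightarrow> 'a set set" where
  "V p = {A. is_sup A p}"

definition prime_el :: "'a::lattice \<Rightarrow> bool" where
  "prime_el q \<longleftrightarrow> \<not> (\<forall>x. x \<le> q) \<and> (\<forall>a b. inf a b \<le> q \<longrightarrow> a \<le> q \<or> b \<le> q)"

definition enough_primes :: "'a::lattice itself \<Rightarrow> bool" where
  "enough_primes _ \<longleftrightarrow> (\<forall>a b::'a. \<not> a \<le> b \<longrightarrow> (\<exists>q. prime_el q \<and> b \<le> q \<and> \<not> a \<le> q))"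

definition S_fin :: "'a set set \<Rightarrow> 'a set set \<Rightarrow> bool" where
  "S_fin \<A> \<B> \<longleftrightarrow> (\<forall>An::nat \<Rightarrow> 'a set. (\<forall>n. An n \<in> \<A>) \<longrightarrow>
     (\<exists>F. (\<forall>n. finite (F n) \<and> F n \<subseteq> An n) \<and> (\<Union>n. F n) \<in> \<B>))"

text \<open>A strategy for Player I maps the (chronological) list of Player II's previous
  moves to Player I's next move.\<close>
definition winning_strategy_I :: "'a set set \<Rightarrow> 'a set set \<Rightarrow> ('a set list \<Rightarrow> 'a set) \<Rightarrow> bool" where
  "winning_strategy_I \<A> \<B> \<sigma> \<longleftrightarrow>
     (\<forall>F::nat \<Rightarrow> 'a set. (\<forall>n. finite (F n) \<and> F n \<subseteq> \<sigma> (map F [0..<n])) \<longrightarrow>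
        (\<forall>n. \<sigma> (map F [0..<n]) \<in> \<A>) \<and> (\<Union>n. F n) \<notin> \<B>)"

end

theory Submission
  imports Defs
begin

(* If S_fin fails for (A_n), Player I wins by playing A_n whatever Player II does. Conversely,
  S_fin gives every A in V_p an increasing sequence of finite subsets with union in V_p. If
  Player II always answers with a member of that sequence, her moves are coded by natural
  numbers, and the answers available after the moves coded by s form such a sequence U s.
  With enough primes, A is in V_p iff A lies below p and, for every prime q not above p, some
  element of A is not below q. A Koenig-type argument bounds, for fixed q and n, the codes
  along all plays of length at most n whose moves stay below q. Hence the meets of choice
  functions over the finitely many short plays with bounded codes form a set
  C_n = (UN k. meets n k) in V_p (primality keeps such a meet outside the ideal below q),
  and S_fin applied to (C_n) yields bounds t n such that Player II wins the play coded by t. *)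

lemma finite_bounded_witnesses:
  fixes P :: "'b \<Rightarrow> nat \<Rightarrow> bool"
  assumes "finite S" and "\<And>x. x \<in> S \<Longrightarrow> \<exists>k. P x k"
  shows "\<exists>K. \<forall>x\<in>S. \<exists>k\<le>K. P x k"
proof -
  obtain f where "\<forall>x\<in>S. P x (f x)" using assms(2) by metis
  then have "\<forall>x\<in>S. f x \<le> Max (f ` S) \<and> P x (f x)" using assms(1) by simp
  then show ?thesis by blast
qed

lemma Inf_fin_not_le_prime:
  fixes q :: "'a::lattice"
  assumes "finite X" "X \<noteq> {}" "prime_el q" "\<And>x. x \<in> X \<Longrightarrow> \<not> x \<le> q"
  shows "\<not> Inf_fin X \<le> q"
  using assms(1,2,4)
proof (induction X rule: finite_ne_induct)
  case (insert x X)
  then show ?case using assms(3) unfolding prime_el_def by auto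
qed simp

lemma is_sup_iff_primes:
  fixes p :: "'a::lattice"
  assumes "enough_primes TYPE('a)"
  shows "is_sup A p \<longleftrightarrow> A \<subseteq> {..p} \<and> (\<forall>q. prime_el q \<and> \<not> p \<le> q \<longrightarrow> \<not> A \<subseteq> {..q})"
proof
  assume "A \<subseteq> {..p} \<and> (\<forall>q. prime_el q \<and> \<not> p \<le> q \<longrightarrow> \<not> A \<subseteq> {..q})"
  moreover have "p \<le> u" if "A \<subseteq> {..u}" "\<forall>q. prime_el q \<and> \<not> p \<le> q \<longrightarrow> \<not> A \<subseteq> {..q}" for u
  proof (rule ccontr)
    assume "\<not> p \<le> u"
    then obtain q where "prime_el q" "u \<le> q" "\<not> p \<le> q"
      using assms unfolding enough_primes_def by blast
    moreover have "A \<subseteq> {..q}"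
      using \<open>A \<subseteq> {..u}\<close> \<open>u \<le> q\<close> by (meson atMost_subset_iff subset_trans)
    ultimately show False using that by blast
  qed
  ultimately show "is_sup A p" unfolding is_sup_def by auto
qed (auto simp: is_sup_def)

lemma S_finD:
  fixes A :: "nat \<Rightarrow> 'a set"
  assumes "S_fin \<A> \<B>" "\<And>n. A n \<in> \<A>"
  shows "\<exists>F. (\<forall>n. finite (F n) \<and> F n \<subseteq> A n) \<and> (\<Union>n. F n) \<in> \<B>"
  using assms unfolding S_fin_def by blast

lemma not_S_fin_imp_winning_strategy_I:
  fixes \<A> \<B> :: "'b set set"
  assumes "\<not> S_fin \<A> \<B>"
  shows "\<exists>\<sigma>. winning_strategy_I \<A> \<B> \<sigma>"
proof -
  obtain A :: "nat \<Rightarrow> 'b set" where "\<forall>n. A n \<in> \<A>"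
    and "\<not> (\<exists>F. (\<forall>n. finite (F n) \<and> F n \<subseteq> A n) \<and> (\<Union>n. F n) \<in> \<B>)"
    using assms unfolding S_fin_def by (simp only: not_all not_imp) blast
  then have "winning_strategy_I \<A> \<B> (\<lambda>h :: 'b set list. A (length h))"
    unfolding winning_strategy_I_def by auto
  then show ?thesis by blast
qed

lemma S_fin_imp_increasing_selections:
  fixes \<A> \<B> :: "'b set set"
  assumes "S_fin \<A> \<B>"
  shows "\<exists>G :: 'b set \<Rightarrow> nat \<Rightarrow> 'b set. \<forall>A. mono (G A)
           \<and> (\<forall>k. finite (G A k) \<and> G A k \<subseteq> A) \<and> (A \<in> \<A> \<longrightarrow> (\<Union>k. G A k) \<in> \<B>)"
proof -
  have "\<exists>G :: nat \<Rightarrow> 'b set. mono G \<and> (\<forall>k. finite (G k) \<and> G k \<subseteq> A)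
          \<and> (A \<in> \<A> \<longrightarrow> (\<Union>k. G k) \<in> \<B>)" for A
  proof (cases "A \<in> \<A>")
    case True
    have "\<exists>F :: nat \<Rightarrow> 'b set. (\<forall>n. finite (F n) \<and> F n \<subseteq> A) \<and> (\<Union>n. F n) \<in> \<B>"
      by (rule S_finD[where A = "\<lambda>_. A", OF assms True])
    then obtain F :: "nat \<Rightarrow> 'b set"
      where F: "\<forall>n. finite (F n) \<and> F n \<subseteq> A" "(\<Union>n. F n) \<in> \<B>"
      by blast
    have "mono (\<lambda>k. \<Union>j\<le>k. F j)"
      by (intro monoI UN_mono) auto
    moreover have "(\<Union>k. \<Union>j\<le>k. F j) = (\<Union>n. F n)"
      by auto
    ultimately show ?thesis
      using F by (intro exI[of _ "\<lambda>k. \<Union>j\<le>k. F j"]) auto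
  next
    case False
    then show ?thesis
      by (intro exI[of _ "\<lambda>_. {}"]) (simp add: mono_def)
  qed
  then show ?thesis by (intro choice allI)
qed

definition bounded_paths :: "nat \<Rightarrow> nat \<Rightarrow> nat list set" where
  "bounded_paths n k = {s. set s \<subseteq> {..<k} \<and> length s \<le> n}"

lemma finite_bounded_paths: "finite (bounded_paths n k)"
  unfolding bounded_paths_def by (rule finite_lists_length_le) simp

lemma Nil_in_bounded_paths: "[] \<in> bounded_paths n k"
  unfolding bounded_paths_def by simp

(* U s k is the k-th answer of Player II after the answers coded by s. *)
locale cover_tree =
  fixes p :: "'a::lattice" and U :: "nat list \<Rightarrow> nat \<Rightarrow> 'a set"
  assumes enough_primes: "enough_primes TYPE('a)"
    and mono_U: "mono (U s)"
    and U_cover: "(\<Union>k. U s k) \<in> V p"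
begin

lemma U_below: "U s k \<subseteq> {..p}"
  using U_cover[of s] unfolding V_def is_sup_def by auto

lemma U_escapes:
  assumes "\<not> p \<le> q"
  shows "\<exists>k. \<not> U s k \<subseteq> {..q}"
proof -
  have "\<not> (\<Union>k. U s k) \<subseteq> {..q}"
    using U_cover[of s] assms unfolding V_def is_sup_def by (fastforce simp: subset_iff)
  then show ?thesis by blast
qed

lemma U_escape_mono: "\<not> U s k \<subseteq> X \<Longrightarrow> k \<le> k' \<Longrightarrow> \<not> U s k' \<subseteq> X"
  using monoD[OF mono_U] by blast

lemma U_escapes_uniformly:
  assumes "finite S" "\<not> p \<le> q"
  shows "\<exists>k. \<forall>s\<in>S. \<not> U s k \<subseteq> {..q}"
proof -
  obtain K where "\<forall>s\<in>S. \<exists>k\<le>K. \<not> U s k \<subseteq> {..q}"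
    using finite_bounded_witnesses[OF assms(1), of "\<lambda>s k. \<not> U s k \<subseteq> {..q}"]
      U_escapes[OF assms(2)] by blast
  then have "\<forall>s\<in>S. \<not> U s K \<subseteq> {..q}" using U_escape_mono by blast
  then show ?thesis ..
qed

definition path_set :: "nat list \<Rightarrow> 'a set" where
  "path_set s = (\<Union>j<length s. U (take j s) (s ! j))"

lemma path_set_Nil [simp]: "path_set [] = {}"
  unfolding path_set_def by simp

lemma path_set_snoc [simp]: "path_set (s @ [k]) = path_set s \<union> U s k"
  unfolding path_set_def by (simp add: lessThan_Suc nth_append Un_commute)

lemma path_set_branch: "path_set (map t [0..<n]) = (\<Union>j<n. U (map t [0..<j]) (t j))"
  by (induction n) (simp_all add: lessThan_Suc Un_commute)

lemma path_entries_bounded: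
  assumes "\<forall>s\<in>bounded_paths n k. path_set s \<subseteq> {..q} \<longrightarrow> \<not> U s k \<subseteq> {..q}"
  shows "path_set s \<subseteq> {..q} \<Longrightarrow> length s \<le> Suc n \<Longrightarrow> set s \<subseteq> {..<k}"
proof (induction s rule: rev_induct)
  case (snoc x s)
  then have "set s \<subseteq> {..<k}" and "U s x \<subseteq> {..q}" by auto
  with snoc.prems have "\<not> U s k \<subseteq> {..q}"
    using assms unfolding bounded_paths_def by auto
  then have "x < k"
    using \<open>U s x \<subseteq> {..q}\<close> U_escape_mono by (meson not_le)
  then show ?case using \<open>set s \<subseteq> {..<k}\<close> by simp
qed simp

(* The induction step is Koenig's lemma: by path_entries_bounded the relevant paths of
  length Suc n form a finite set, on which U escapes uniformly. *)
lemma paths_escape_uniformly: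
  assumes "\<not> p \<le> q"
  shows "\<exists>k. \<forall>s\<in>bounded_paths n k. path_set s \<subseteq> {..q} \<longrightarrow> \<not> U s k \<subseteq> {..q}"
proof (induction n)
  case 0
  obtain k where "\<not> U [] k \<subseteq> {..q}" using U_escapes[OF assms] by blast
  then show ?case by (auto simp: bounded_paths_def)
next
  case (Suc n)
  then obtain k where k: "\<forall>s\<in>bounded_paths n k. path_set s \<subseteq> {..q} \<longrightarrow> \<not> U s k \<subseteq> {..q}"
    by blast
  obtain K where K: "\<forall>s\<in>bounded_paths (Suc n) k. \<not> U s K \<subseteq> {..q}"
    using U_escapes_uniformly[OF finite_bounded_paths assms] by blast
  have "\<not> U s (max k K) \<subseteq> {..q}"
    if "s \<in> bounded_paths (Suc n) (max k K)" "path_set s \<subseteq> {..q}" for s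
  proof -
    have "s \<in> bounded_paths (Suc n) k"
      using path_entries_bounded[OF k] that unfolding bounded_paths_def by auto
    then have "\<not> U s K \<subseteq> {..q}" using K by blast
    then show ?thesis using U_escape_mono by simp
  qed
  then show ?case by blast
qed

definition meets :: "nat \<Rightarrow> nat \<Rightarrow> 'a set" where
  "meets n k = {Inf_fin (f ` bounded_paths n k) | f.
     \<forall>s\<in>bounded_paths n k. f s \<in> U s k \<union> path_set s}"

lemma meets_below: "meets n k \<subseteq> {..p}"
proof
  fix c assume "c \<in> meets n k"
  then obtain f where c: "c = Inf_fin (f ` bounded_paths n k)"
    and f: "\<forall>s\<in>bounded_paths n k. f s \<in> U s k \<union> path_set s"
    unfolding meets_def by blast
  have "f [] \<in> U [] k"
    using f Nil_in_bounded_paths by fastforce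
  then have "f [] \<le> p" using U_below by blast
  moreover have "c \<le> f []"
    unfolding c using finite_bounded_paths Nil_in_bounded_paths by (simp add: Inf_fin.coboundedI)
  ultimately show "c \<in> {..p}" by simp
qed

lemma meets_cover: "(\<Union>k. meets n k) \<in> V p"
proof -
  have "\<not> (\<Union>k. meets n k) \<subseteq> {..q}" if q: "prime_el q" "\<not> p \<le> q" for q
  proof -
    obtain k where "\<forall>s\<in>bounded_paths n k. path_set s \<subseteq> {..q} \<longrightarrow> \<not> U s k \<subseteq> {..q}"
      using paths_escape_uniformly q(2) by blast
    then have "\<forall>s\<in>bounded_paths n k. \<exists>a. a \<in> U s k \<union> path_set s \<and> \<not> a \<le> q" by blast
    then obtain f where f: "\<forall>s\<in>bounded_paths n k. f s \<in> U s k \<union> path_set s \<and> \<not> f s \<le> q"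
      by metis
    have "\<not> Inf_fin (f ` bounded_paths n k) \<le> q"
      using Inf_fin_not_le_prime[OF finite_imageI[OF finite_bounded_paths] _ q(1)] f
        Nil_in_bounded_paths by blast
    moreover have "Inf_fin (f ` bounded_paths n k) \<in> meets n k"
      using f unfolding meets_def by blast
    ultimately show ?thesis by blast
  qed
  moreover have "(\<Union>k. meets n k) \<subseteq> {..p}" using meets_below by blast
  ultimately show ?thesis unfolding V_def using is_sup_iff_primes[OF enough_primes] by simp
qed

lemma meets_not_below_bounds_paths:
  assumes "c \<in> meets n k" "\<not> c \<le> q" "path_set s \<subseteq> {..q}" "length s \<le> Suc n"
  shows "set s \<subseteq> {..<k}"
proof (rule path_entries_bounded[OF _ assms(3,4)])
  obtain f where c: "c = Inf_fin (f ` bounded_paths n k)"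
    and f: "\<forall>s\<in>bounded_paths n k. f s \<in> U s k \<union> path_set s"
    using assms(1) unfolding meets_def by blast
  show "\<forall>s\<in>bounded_paths n k. path_set s \<subseteq> {..q} \<longrightarrow> \<not> U s k \<subseteq> {..q}"
  proof (intro ballI impI)
    fix s assume s: "s \<in> bounded_paths n k" "path_set s \<subseteq> {..q}"
    have "c \<le> f s" unfolding c using s(1) finite_bounded_paths by (simp add: Inf_fin.coboundedI)
    then have "\<not> f s \<le> q" using assms(2) order_trans by blast
    then show "\<not> U s k \<subseteq> {..q}" using f s by auto
  qed
qed

lemma exists_covering_branch:
  assumes "S_fin (V p) (V p)"
  shows "\<exists>t. (\<Union>n. U (map t [0..<n]) (t n)) \<in> V p"
proof -
  have "\<exists>F. (\<forall>n. finite (F n) \<and> F n \<subseteq> (\<Union>k. meets n k)) \<and> (\<Union>n. F n) \<in> V p"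
    by (rule S_finD[OF assms meets_cover])
  then obtain F
    where F: "\<And>n. finite (F n)" "\<And>n. F n \<subseteq> (\<Union>k. meets n k)" "(\<Union>n. F n) \<in> V p"
    by blast
  have "\<exists>K. \<forall>c\<in>F n. \<exists>k\<le>K. c \<in> meets n k" for n
    by (rule finite_bounded_witnesses) (use F(1,2) in blast)+
  then obtain t where t: "\<And>n. \<forall>c\<in>F n. \<exists>k\<le>t n. c \<in> meets n k"
    using choice[of "\<lambda>n K. \<forall>c\<in>F n. \<exists>k\<le>K. c \<in> meets n k"] by blast
  let ?B = "\<Union>n. U (map t [0..<n]) (t n)"
  have "\<not> ?B \<subseteq> {..q}" if q: "prime_el q" "\<not> p \<le> q" for q
  proof
    assume B: "?B \<subseteq> {..q}"
    have "\<not> (\<Union>n. F n) \<subseteq> {..q}"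
      using F(3) q unfolding V_def is_sup_iff_primes[OF enough_primes] by blast
    then obtain n c where "c \<in> F n" "\<not> c \<le> q" by blast
    then obtain k where k: "k \<le> t n" "c \<in> meets n k" using t by blast
    have "path_set (map t [0..<Suc n]) \<subseteq> {..q}"
      using B unfolding path_set_branch by blast
    then have "set (map t [0..<Suc n]) \<subseteq> {..<k}"
      by (rule meets_not_below_bounds_paths[OF k(2) \<open>\<not> c \<le> q\<close>]) simp
    then show False using k(1) by simp
  qed
  moreover have "?B \<subseteq> {..p}" using U_below by blast
  ultimately show ?thesis unfolding V_def using is_sup_iff_primes[OF enough_primes] by auto
qed

end

(* Player II's moves when Player I follows \<sigma> and II answers I's j-th move A by G A (s ! j). *)
definition replay ::
  "('b set list \<Rightarrow> 'b set) \<Rightarrow> ('b set \<Rightarrow> nat \<Rightarrow> 'b set) \<Rightarrow> nat list \<Rightarrow> 'b set list" where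
  "replay \<sigma> G = foldl (\<lambda>h k. h @ [G (\<sigma> h) k]) []"

lemma replay_snoc: "replay \<sigma> G (s @ [k]) = replay \<sigma> G s @ [G (\<sigma> (replay \<sigma> G s)) k]"
  by (simp add: replay_def)

lemma replay_branch:
  "replay \<sigma> G (map t [0..<n]) = map (\<lambda>j. G (\<sigma> (replay \<sigma> G (map t [0..<j]))) (t j)) [0..<n]"
  by (induction n) (simp_all add: replay_snoc replay_def)

lemma winning_strategy_I_replay:
  assumes "winning_strategy_I \<A> \<B> \<sigma>" and "\<And>A k. finite (G A k) \<and> G A k \<subseteq> A"
  shows "\<sigma> (replay \<sigma> G s) \<in> \<A>"
    and "(\<Union>n. G (\<sigma> (replay \<sigma> G (map t [0..<n]))) (t n)) \<notin> \<B>"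
proof -
  define F where "F t = (\<lambda>n. G (\<sigma> (replay \<sigma> G (map t [0..<n]))) (t n))" for t
  have replay_F: "replay \<sigma> G (map t [0..<n]) = map (F t) [0..<n]" for t n
    unfolding F_def by (rule replay_branch)
  have "F t n = G (\<sigma> (map (F t) [0..<n])) (t n)" for t n
    by (subst replay_F[symmetric]) (simp add: F_def)
  then have "\<forall>n. finite (F t n) \<and> F t n \<subseteq> \<sigma> (map (F t) [0..<n])" for t
    using assms(2) by simp
  then have win: "(\<forall>n. \<sigma> (map (F t) [0..<n]) \<in> \<A>) \<and> (\<Union>n. F t n) \<notin> \<B>" for t
    using assms(1) unfolding winning_strategy_I_def by blast
  have "replay \<sigma> G s = map (F (nth s)) [0..<length s]"
    using replay_F[of "nth s" "length s"] by (simp add: map_nth)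
  then show "\<sigma> (replay \<sigma> G s) \<in> \<A>" using win by simp
  show "(\<Union>n. G (\<sigma> (replay \<sigma> G (map t [0..<n]))) (t n)) \<notin> \<B>"
    using win unfolding F_def by blast
qed

lemma S_fin_imp_no_winning_strategy_I:
  fixes p :: "'a::lattice"
  assumes "enough_primes TYPE('a)" and "S_fin (V p) (V p)"
  shows "\<not> winning_strategy_I (V p) (V p) \<sigma>"
proof
  assume win: "winning_strategy_I (V p) (V p) \<sigma>"
  obtain G :: "'a set \<Rightarrow> nat \<Rightarrow> 'a set"
    where G: "\<And>A. mono (G A)" "\<And>A k. finite (G A k) \<and> G A k \<subseteq> A"
      "\<And>A. A \<in> V p \<Longrightarrow> (\<Union>k. G A k) \<in> V p"
    using S_fin_imp_increasing_selections[OF assms(2)] by blast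
  interpret cover_tree p "\<lambda>s. G (\<sigma> (replay \<sigma> G s))"
    using assms(1) G winning_strategy_I_replay(1)[where G = G, OF win G(2)]
    by unfold_locales auto
  obtain t where "(\<Union>n. G (\<sigma> (replay \<sigma> G (map t [0..<n]))) (t n)) \<in> V p"
    using exists_covering_branch[OF assms(2)] by blast
  then show False using winning_strategy_I_replay(2)[where G = G, OF win G(2)] by blast
qed

theorem theorem1p1:
  fixes p :: "'a::lattice"
  assumes "enough_primes TYPE('a)"
  shows "S_fin (V p) (V p) \<longleftrightarrow> \<not> (\<exists>\<sigma>. winning_strategy_I (V p) (V p) \<sigma>)"
  using S_fin_imp_no_winning_strategy_I[OF assms] not_S_fin_imp_winning_strategy_I by blast

end
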